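(* Assume hypotheses (A) and (B) and suppose the routing matrix $P$ has a branching structure, i.e. for every $i\in\{1,\dots,d\}$ the set $\{j\in\{1,\dots,d\}:p_{ji}>0\}$ has at most one element. Then for every $\varepsilon>0$ and every $\rho=(\rho_1,\dots,\rho_d)$ with $(\rho P)_i<\rho_i$ for all $i$, the vector $\gamma$ with $\gamma_i=\varepsilon G_{ii}/\rho_i$ ($i=1,\dots,d$) belongs to $\Gamma$.
   Context: Jackson network with $d$ queues: arrival rates $\lambda_i\ge0$, service rates $\mu_i>0$, routing matrix $P=(p_{ij})_{i,j=1}^d$ nonnegative with $p_{ii}=0$, $\sum_jp_{ij}\le1$, $p_{i0}=1-\sum_jp_{ij}$. Hypothesis (A): the jump-rate kernel on $\mathbb{Z}^d$ (jumps $+\epsilon^i$ at rate $\lambda_i$, $-\epsilon^i$ at rate $\mu_ip_{i0}$, $\epsilon^j-\epsilon^i$ at rate $\mu_ip_{ij}$) is irreducible, equivalently spectral radius of $P$ $<1$ and for every $i$ there are $n,j$ with $\lambda_jp^{(n)}_{ji}>0$; the traffic equations $\nu_j=\lambda_j+\sum_i\nu_ip_{ij}$ then have a unique solution with $\nu_i>0$. Hypothesis (B): $\nu_i<\mu_i$ for all $i$. $G=(I-P)^{-1}$, $(\rho P)_i=\sum_j\rho_jp_{ji}$. $Q_{ij}$: probability that the chain on $\{0,\dots,d\}$ with transitions $p_{ij}$ ($0$ absorbing) started at $i$ ever visits $j$ (time $0$ included). For $\gamma\in\mathbb{R}_+^d$, $\overrightarrow{\gamma_i}$ has components $\gamma_i^j=\log(1+Q_{ji}\gamma_i)$;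 $\Gamma$ is the set of $\gamma\in\mathbb{R}_+^d$ such that for every $i$ and nonzero $v\in\mathbb{R}_+^d$ with $v^i=0$, $\overrightarrow{\gamma_i}\cdot v<\max_j\overrightarrow{\gamma_j}\cdot v$. *)

theory Defs
  imports "HOL-Analysis.Analysis"
begin

text \<open>Queues are indexed by a finite type 'n (playing the role of {1..d}).
  The routing matrix is P :: real^'n^'n with P$i$j = p_ij.\<close>

definition exit_prob :: "real^'n^'n \<Rightarrow> 'n::finite \<Rightarrow> real" where
  "exit_prob P i = 1 - (\<Sum>j\<in>UNIV. P$i$j)"

definition unit_int :: "'n::finite \<Rightarrow> int^'n" where
  "unit_int i = (\<chi> k. if k = i then 1 else 0)"

text \<open>One-step relation of the jump-rate kernel on Z^d: jumps with positive rate.\<close>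
definition jackson_step :: "real^'n \<Rightarrow> real^'n \<Rightarrow> real^'n^'n \<Rightarrow> ((int^'n) \<times> (int^'n)) set" where
  "jackson_step lam mu P = {(x, y). \<exists>i::'n::finite.
       (y = x + unit_int i \<and> lam$i > 0)
     \<or> (y = x - unit_int i \<and> mu$i * exit_prob P i > 0)
     \<or> (\<exists>j. y = x + unit_int j - unit_int i \<and> mu$i * P$i$j > 0)}"

definition kernel_irreducible :: "real^'n \<Rightarrow> real^'n \<Rightarrow> real^'n^'n::finite \<Rightarrow> bool" where
  "kernel_irreducible lam mu P \<longleftrightarrow> (\<forall>x y. (x, y) \<in> (jackson_step lam mu P)\<^sup>*)"

fun path_prob :: "real^'n^'n \<Rightarrow> 'n list \<Rightarrow> real" where
  "path_prob P (a # b # xs) = P$a$b * path_prob P (b # xs)"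
| "path_prob P _ = 1"

text \<open>Q i j: probability that the chain on {0,...,d} (0 absorbing) started at i ever visits j
  (time 0 included): sum over first-passage paths i, k_1, ..., k_m, j with k_l \<noteq> j.
  Paths through the absorbing state 0 never reach j, so only states in 'n occur.\<close>
definition visit_prob :: "real^'n^'n \<Rightarrow> 'n::finite \<Rightarrow> 'n \<Rightarrow> real" where
  "visit_prob P i j = (if i = j then 1 else
     (\<Sum>m. \<Sum>xs\<in>{xs. length xs = m \<and> set xs \<subseteq> UNIV - {j}}. path_prob P (i # xs @ [j])))"

definition green :: "real^'n^'n \<Rightarrow> real^'n^'n::finite" where
  "green P = matrix_inv (mat 1 - P)"

definition gamma_arrow :: "real^'n^'n \<Rightarrow> real^'n \<Rightarrow> 'n::finite \<Rightarrow> real^'n" where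
  "gamma_arrow P \<gamma> i = (\<chi> j. ln (1 + visit_prob P j i * \<gamma>$i))"

definition Gamma_set :: "real^'n^'n::finite \<Rightarrow> (real^'n) set" where
  "Gamma_set P = {\<gamma>. (\<forall>i. \<gamma>$i \<ge> 0) \<and>
     (\<forall>i v. (\<forall>k. v$k \<ge> 0) \<longrightarrow> v \<noteq> 0 \<longrightarrow> v$i = 0 \<longrightarrow>
        gamma_arrow P \<gamma> i \<bullet> v < (MAX j. gamma_arrow P \<gamma> j \<bullet> v))}"

end

theory Submission
  imports Defs
begin

text \<open>Irreducibility makes the routing chain transient, so \<open>G = (I - P)\<inverse>\<close> exists, is
  nonnegative and satisfies \<open>Q\<^sub>k\<^sub>i G\<^sub>i\<^sub>i = G\<^sub>k\<^sub>i\<close>. Hence the \<open>\<gamma>\<^sub>j\<close>-arrow applied to \<open>v\<close> is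
  \<open>\<Sum>\<^sub>k log (1 + X\<^sub>k\<^sub>j) v\<^sup>k\<close> with \<open>X\<^sub>k\<^sub>j = \<epsilon> G\<^sub>k\<^sub>j / \<rho>\<^sub>j\<close>. If \<open>a\<close> is the only possible
  predecessor of \<open>i\<close>, then \<open>G\<^sub>k\<^sub>i = G\<^sub>k\<^sub>a p\<^sub>a\<^sub>i\<close> for \<open>k \<noteq> i\<close>, so off the diagonal column \<open>i\<close>
  of \<open>X\<close> is column \<open>a\<close> scaled by \<open>c = p\<^sub>a\<^sub>i \<rho>\<^sub>a / \<rho>\<^sub>i < 1\<close>. For \<open>v \<ge> 0\<close> with \<open>v\<^sup>i = 0\<close>
  the sum for \<open>a\<close> therefore exceeds the sum for \<open>i\<close> unless the latter vanishes, and then any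
  \<open>j\<close> with \<open>v\<^sup>j > 0\<close> gives a positive sum, because \<open>X\<^sub>j\<^sub>j > 0\<close>.\<close>

definition first_visit_prob :: "real^'n^'n \<Rightarrow> nat \<Rightarrow> 'n::finite \<Rightarrow> 'n \<Rightarrow> real" where
  "first_visit_prob P m k i =
     (\<Sum>xs\<in>{xs. length xs = m \<and> set xs \<subseteq> UNIV - {i}}. path_prob P (k # xs @ [i]))"

lemma visit_prob_eq_suminf: "k \<noteq> i \<Longrightarrow> visit_prob P k i = (\<Sum>m. first_visit_prob P m k i)"
  unfolding visit_prob_def first_visit_prob_def by simp

lemma first_visit_prob_0 [simp]: "first_visit_prob P 0 k i = P$k$i"
proof -
  have "{xs. length xs = 0 \<and> set xs \<subseteq> UNIV - {i}} = {[]}" by auto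
  then show ?thesis unfolding first_visit_prob_def by simp
qed

lemma first_visit_prob_Suc:
  "first_visit_prob P (Suc m) k i = (\<Sum>x\<in>UNIV - {i}. P$k$x * first_visit_prob P m x i)"
proof -
  define L where "L = {ys. length ys = m \<and> set ys \<subseteq> UNIV - {i}}"
  have split:
    "{xs. length xs = Suc m \<and> set xs \<subseteq> UNIV - {i}} = (\<lambda>(x, ys). x # ys) ` ((UNIV - {i}) \<times> L)"
    by (auto simp: L_def length_Suc_conv image_def)
  have inj: "inj_on (\<lambda>(x, ys). x # ys) ((UNIV - {i}) \<times> L)"
    by (auto simp: inj_on_def)
  have "first_visit_prob P (Suc m) k i
      = (\<Sum>(x, ys)\<in>(UNIV - {i}) \<times> L. path_prob P (k # x # ys @ [i]))"
    unfolding first_visit_prob_def split by (subst sum.reindex[OF inj]) (simp add: case_prod_unfold)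
  also have "\<dots> = (\<Sum>x\<in>UNIV - {i}. \<Sum>ys\<in>L. path_prob P (k # x # ys @ [i]))"
    by (rule sum.cartesian_product[symmetric])
  also have "\<dots> = (\<Sum>x\<in>UNIV - {i}. P$k$x * first_visit_prob P m x i)"
    unfolding first_visit_prob_def L_def by (simp add: sum_distrib_left)
  finally show ?thesis .
qed

locale substochastic =
  fixes P :: "real^'n::finite^'n"
  assumes nonneg: "\<And>i j. 0 \<le> P$i$j"
    and row_sum_le_1: "\<And>i. (\<Sum>j\<in>UNIV. P$i$j) \<le> 1"

definition return_prob :: "real^'n^'n \<Rightarrow> 'n::finite \<Rightarrow> real" where
  "return_prob P i = (\<Sum>m\<in>UNIV. P$i$m * visit_prob P m i)"

context substochastic
begin

lemma path_prob_nonneg: "0 \<le> path_prob P xs"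
  by (induction xs rule: induct_list012) (simp_all add: nonneg)

lemma first_visit_prob_nonneg: "0 \<le> first_visit_prob P m k i"
  unfolding first_visit_prob_def by (intro sum_nonneg path_prob_nonneg)

lemma sum_first_visit_prob_le_1: "(\<Sum>m<M. first_visit_prob P m k i) \<le> 1"
proof (induction M arbitrary: k)
  case (Suc M)
  have "(\<Sum>m<Suc M. first_visit_prob P m k i)
      = P$k$i + (\<Sum>x\<in>UNIV - {i}. P$k$x * (\<Sum>m<M. first_visit_prob P m x i))"
    by (simp add: sum.lessThan_Suc_shift first_visit_prob_Suc sum_distrib_left sum.swap[of _ "{..<M}"]
             del: sum.lessThan_Suc)
  also have "\<dots> \<le> P$k$i + (\<Sum>x\<in>UNIV - {i}. P$k$x)"
    by (intro add_left_mono sum_mono mult_left_le) (simp_all add: nonneg Suc)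
  also have "\<dots> = (\<Sum>x\<in>UNIV. P$k$x)"
    by (simp add: sum.remove[of UNIV i])
  finally show ?case using row_sum_le_1[of k] by linarith
qed simp

lemma summable_first_visit_prob: "summable (\<lambda>m. first_visit_prob P m k i)"
proof (rule bounded_imp_summable[where B = 1])
  show "(\<Sum>m\<le>M. first_visit_prob P m k i) \<le> 1" for M
    using sum_first_visit_prob_le_1[where M = "Suc M"] by (simp add: lessThan_Suc_atMost)
qed (rule first_visit_prob_nonneg)

lemma visit_prob_nonneg: "0 \<le> visit_prob P k i"
  using first_visit_prob_nonneg summable_first_visit_prob
  by (cases "k = i") (simp_all add: visit_prob_eq_suminf visit_prob_def[of P i i] suminf_nonneg)

lemma visit_prob_le_1: "visit_prob P k i \<le> 1"
  using summable_first_visit_prob sum_first_visit_prob_le_1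
  by (cases "k = i") (simp_all add: visit_prob_eq_suminf visit_prob_def[of P i i] suminf_le_const)

lemma visit_prob_first_step:
  assumes "k \<noteq> i"
  shows "visit_prob P k i = (\<Sum>x\<in>UNIV. P$k$x * visit_prob P x i)"
proof -
  have "visit_prob P k i = (\<Sum>m. first_visit_prob P (Suc m) k i) + P$k$i"
    unfolding visit_prob_eq_suminf[OF assms]
    using suminf_split_head[OF summable_first_visit_prob] by simp
  also have "(\<Sum>m. first_visit_prob P (Suc m) k i)
      = (\<Sum>x\<in>UNIV - {i}. \<Sum>m. P$k$x * first_visit_prob P m x i)"
    unfolding first_visit_prob_Suc by (intro suminf_sum summable_mult summable_first_visit_prob)
  also have "\<dots> = (\<Sum>x\<in>UNIV - {i}. P$k$x * visit_prob P x i)"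
    by (intro sum.cong refl)
       (simp add: suminf_mult[OF summable_first_visit_prob] visit_prob_eq_suminf)
  finally show ?thesis
    by (simp add: sum.remove[of UNIV i] visit_prob_def)
qed

lemma return_prob_le_1: "return_prob P i \<le> 1"
proof -
  have "return_prob P i \<le> (\<Sum>m\<in>UNIV. P$i$m)"
    unfolding return_prob_def
    by (intro sum_mono mult_left_le) (simp_all add: visit_prob_le_1 nonneg)
  then show ?thesis using row_sum_le_1[of i] by linarith
qed

lemma I_minus_P_mult_visit_prob:
  "(mat 1 - P) *v (\<chi> k. visit_prob P k i) = (\<chi> k. if k = i then 1 - return_prob P i else 0)"
  unfolding matrix_vector_mult_diff_rdistrib matrix_vector_mul_lid
  by (auto simp: vec_eq_iff matrix_vector_mult_def return_prob_def visit_prob_first_step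
                 visit_prob_def[of P i i])

end

lemma unit_int_sum: "(\<Sum>k\<in>S. unit_int i $ k) = (if i \<in> S then 1 else 0)"
  unfolding unit_int_def by (simp add: sum.delta)

lemma jackson_step_rtrancl_sum_mono:
  fixes S :: "'n::finite set"
  assumes "(x, y) \<in> (jackson_step lam mu P)\<^sup>*"
    and mu_pos: "\<And>i. 0 < mu$i"
    and no_exit: "\<And>i. i \<in> S \<Longrightarrow> exit_prob P i = 0"
    and closed: "\<And>i j. i \<in> S \<Longrightarrow> 0 < P$i$j \<Longrightarrow> j \<in> S"
  shows "(\<Sum>k\<in>S. x$k) \<le> (\<Sum>k\<in>S. y$k)"
  using assms(1)
proof (induction rule: rtrancl_induct)
  case (step y z)
  from step.hyps(2) obtain i where
    "z = y + unit_int i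
     \<or> (z = y - unit_int i \<and> 0 < mu$i * exit_prob P i)
     \<or> (\<exists>j. z = y + unit_int j - unit_int i \<and> 0 < mu$i * P$i$j)"
    unfolding jackson_step_def by auto
  then have "(\<Sum>k\<in>S. y$k) \<le> (\<Sum>k\<in>S. z$k)"
  proof (elim disjE exE conjE)
    assume "z = y - unit_int i" and "0 < mu$i * exit_prob P i"
    moreover from this have "i \<notin> S" using no_exit by auto
    ultimately show ?thesis by (simp add: sum_subtractf unit_int_sum)
  next
    fix j assume "z = y + unit_int j - unit_int i" and "0 < mu$i * P$i$j"
    moreover from this have "i \<in> S \<longrightarrow> j \<in> S"
      using closed mu_pos[of i] by (simp add: zero_less_mult_iff)
    ultimately show ?thesis by (simp add: sum.distrib sum_subtractf unit_int_sum)
  qed (simp add: sum.distrib unit_int_sum)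
  with step.IH show ?case by linarith
qed simp

text \<open>Customers can never all leave a nonempty closed set of queues without exits, whereas
  irreducibility lets the network go from one customer at \<open>k\<close> to the empty state.\<close>
lemma irreducible_no_closed_set:
  fixes S :: "'n::finite set"
  assumes irreducible: "kernel_irreducible lam mu P" and mu_pos: "\<And>i. 0 < mu$i"
    and "k \<in> S" and no_exit: "\<And>i. i \<in> S \<Longrightarrow> exit_prob P i = 0"
    and closed: "\<And>i j. i \<in> S \<Longrightarrow> 0 < P$i$j \<Longrightarrow> j \<in> S"
  shows False
proof -
  have "(unit_int k, 0) \<in> (jackson_step lam mu P)\<^sup>*"
    using irreducible unfolding kernel_irreducible_def by blast
  then have "(\<Sum>i\<in>S. unit_int k $ i) \<le> (\<Sum>i\<in>S. (0 :: int^'n) $ i)"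
    by (rule jackson_step_rtrancl_sum_mono) (use mu_pos no_exit closed in auto)
  then show False using \<open>k \<in> S\<close> by (simp add: unit_int_sum)
qed

context substochastic
begin

lemma harmonic_argmax_closed:
  assumes harmonic: "\<And>k. y$k = (\<Sum>j\<in>UNIV. P$k$j * y$j)"
    and max: "\<And>j. y$j \<le> y$k" and "0 < y$k"
  shows "exit_prob P k = 0" and "0 < P$k$j \<Longrightarrow> y$j = y$k"
proof -
  have le: "(\<Sum>j\<in>UNIV. P$k$j * y$j) \<le> (\<Sum>j\<in>UNIV. P$k$j * y$k)"
    by (intro sum_mono mult_left_mono max nonneg)
  have "(\<Sum>j\<in>UNIV. P$k$j * y$k) = (\<Sum>j\<in>UNIV. P$k$j) * y$k"
    by (simp add: sum_distrib_right)
  moreover have "(\<Sum>j\<in>UNIV. P$k$j) * y$k \<le> y$k"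
    using row_sum_le_1[of k] \<open>0 < y$k\<close> by (simp add: mult_le_cancel_right1)
  ultimately have sums: "(\<Sum>j\<in>UNIV. P$k$j * y$j) = (\<Sum>j\<in>UNIV. P$k$j * y$k)"
    and "(\<Sum>j\<in>UNIV. P$k$j) * y$k = y$k"
    using le harmonic[of k] by linarith+
  then show "exit_prob P k = 0"
    using \<open>0 < y$k\<close> by (simp add: exit_prob_def)
  have "(\<Sum>j\<in>UNIV. P$k$j * (y$k - y$j)) = 0"
    using sums by (simp add: right_diff_distrib sum_subtractf)
  then have "P$k$j * (y$k - y$j) = 0"
    by (subst (asm) sum_nonneg_eq_0_iff) (simp_all add: max nonneg)
  then show "0 < P$k$j \<Longrightarrow> y$j = y$k" by simp
qed

lemma harmonic_nonpos:
  assumes "kernel_irreducible lam mu P" and "\<And>i. 0 < mu$i"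
    and harmonic: "\<And>k. y$k = (\<Sum>j\<in>UNIV. P$k$j * y$j)"
  shows "y$k \<le> 0"
proof (rule ccontr)
  assume "\<not> y$k \<le> 0"
  have "Max (range (\<lambda>k. y$k)) \<in> range (\<lambda>k. y$k)" by (rule Max_in) auto
  then obtain k0 where k0: "y$k0 = Max (range (\<lambda>k. y$k))" by (metis rangeE)
  have max: "y$j \<le> y$k0" for j unfolding k0 by (rule Max_ge) auto
  with \<open>\<not> y$k \<le> 0\<close> have "0 < y$k0" by (meson not_le order_less_le_trans)
  show False
  proof (rule irreducible_no_closed_set[OF assms(1,2), of k0 "{k. y$k = y$k0}"])
    fix i assume "i \<in> {k. y$k = y$k0}"
    then have "y$i = y$k0" by simp
    then have max_i: "y$j \<le> y$i" for j using max by simp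
    show "exit_prob P i = 0"
      using harmonic_argmax_closed(1)[OF harmonic max_i] \<open>y$i = y$k0\<close> \<open>0 < y$k0\<close> by simp
    show "0 < P$i$j \<Longrightarrow> j \<in> {k. y$k = y$k0}" for j
      using harmonic_argmax_closed(2)[OF harmonic max_i] \<open>y$i = y$k0\<close> \<open>0 < y$k0\<close> by simp
  qed simp
qed

lemma invertible_I_minus_P:
  assumes "kernel_irreducible lam mu P" and "\<And>i. 0 < mu$i"
  shows "invertible (mat 1 - P)"
  unfolding invertible_left_inverse matrix_left_invertible_ker
proof (intro allI impI)
  fix x :: "real^'n"
  assume "(mat 1 - P) *v x = 0"
  then have fixed: "x = P *v x"
    by (simp add: matrix_vector_mult_diff_rdistrib)
  have x_harmonic: "x$k = (\<Sum>j\<in>UNIV. P$k$j * x$j)" for k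
    using arg_cong[OF fixed, of "\<lambda>v. v$k"] by (simp add: matrix_vector_mult_def)
  have neg_x_harmonic: "(- x)$k = (\<Sum>j\<in>UNIV. P$k$j * (- x)$j)" for k
    using x_harmonic[of k] by (simp add: sum_negf)
  have "x$k \<le> 0" and "(- x)$k \<le> 0" for k
    using harmonic_nonpos[OF assms x_harmonic] harmonic_nonpos[OF assms neg_x_harmonic] by blast+
  then show "x = 0" by (simp add: vec_eq_iff order_antisym)
qed

end

locale transient_routing = substochastic +
  assumes transient: "invertible (mat 1 - P)"
begin

lemma green_inverse: "green P ** (mat 1 - P) = mat 1" "(mat 1 - P) ** green P = mat 1"
proof -
  have "(mat 1 - P) ** green P = mat 1 \<and> green P ** (mat 1 - P) = mat 1"
    unfolding green_def matrix_inv_def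
    by (rule someI_ex) (use transient in \<open>simp add: invertible_def\<close>)
  then show "green P ** (mat 1 - P) = mat 1" "(mat 1 - P) ** green P = mat 1" by auto
qed

lemma green_last_step:
  "green P $k$i = (if k = i then 1 else 0) + (\<Sum>m\<in>UNIV. green P $k$m * P$m$i)"
proof -
  have "green P = green P ** ((mat 1 - P) + P)" by simp
  also have "\<dots> = green P ** (mat 1 - P) + green P ** P" by (rule matrix_add_ldistrib)
  also have "\<dots> = mat 1 + green P ** P" by (simp only: green_inverse)
  finally have "green P $k$i = (mat 1 + green P ** P) $k$i" by (rule arg_cong)
  then show ?thesis by (simp add: mat_def matrix_matrix_mult_def)
qed

lemma green_mult_escape_prob: "green P $k$i * (1 - return_prob P i) = visit_prob P k i"
proof -
  define q where "q = (\<chi> k. visit_prob P k i)"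
  have "q = green P *v ((mat 1 - P) *v q)"
    by (simp add: matrix_vector_mul_assoc green_inverse)
  also have "\<dots> = green P *v (\<chi> k. if k = i then 1 - return_prob P i else 0)"
    unfolding q_def I_minus_P_mult_visit_prob ..
  finally have "q$k = (green P *v (\<chi> k. if k = i then 1 - return_prob P i else 0)) $ k"
    by (rule arg_cong)
  then show ?thesis
    by (simp add: q_def matrix_vector_mult_def if_distrib[of "\<lambda>x. _ * x"] cong: if_cong)
qed

lemma green_diag_mult_escape_prob: "green P $i$i * (1 - return_prob P i) = 1"
  using green_mult_escape_prob[of i i] by (simp add: visit_prob_def)

lemma green_diag_pos: "0 < green P $i$i"
proof -
  have "1 - return_prob P i \<noteq> 0"
    using green_diag_mult_escape_prob[of i] by auto
  then have "0 < 1 - return_prob P i"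
    using return_prob_le_1[of i] by linarith
  then show ?thesis
    using green_diag_mult_escape_prob[of i] by (metis zero_less_mult_pos2 zero_less_one)
qed

lemma visit_prob_mult_green_diag: "visit_prob P k i * green P $i$i = green P $k$i"
proof -
  have "visit_prob P k i * green P $i$i = green P $k$i * (green P $i$i * (1 - return_prob P i))"
    unfolding green_mult_escape_prob[symmetric] by (simp only: ac_simps)
  then show ?thesis by (simp add: green_diag_mult_escape_prob)
qed

lemma green_nonneg: "0 \<le> green P $k$i"
  using visit_prob_mult_green_diag[of k i] visit_prob_nonneg[of k i] green_diag_pos[of i]
  by (metis mult_nonneg_nonneg less_imp_le)

text \<open>\<open>\<rho> = (\<rho> (I - P)) G\<close>, where \<open>\<rho> (I - P) > 0\<close>, \<open>G \<ge> 0\<close> and \<open>G\<^sub>i\<^sub>i > 0\<close>.\<close>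
lemma strictly_excessive_pos:
  assumes excessive: "\<And>i. (\<Sum>j\<in>UNIV. \<rho>$j * P$j$i) < \<rho>$i"
  shows "0 < \<rho>$i"
proof -
  have excess: "(\<rho> v* (mat 1 - P))$l = \<rho>$l - (\<Sum>j\<in>UNIV. \<rho>$j * P$j$l)" for l
    by (simp add: vector_matrix_mult_def mat_def right_diff_distrib sum_subtractf
                  if_distrib[of "\<lambda>x. _ * x"] cong: if_cong)
  have "\<rho> = (\<rho> v* (mat 1 - P)) v* green P"
    by (simp add: vector_matrix_mul_assoc green_inverse)
  then have "\<rho>$i = ((\<rho> v* (mat 1 - P)) v* green P) $ i"
    by (rule arg_cong)
  also have "\<dots> = (\<Sum>l\<in>UNIV. (\<rho>$l - (\<Sum>j\<in>UNIV. \<rho>$j * P$j$l)) * green P $l$i)"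
    by (simp add: vector_matrix_mult_def[of "\<rho> v* (mat 1 - P)"] excess)
  also have "\<dots> \<ge> (\<rho>$i - (\<Sum>j\<in>UNIV. \<rho>$j * P$j$i)) * green P $i$i"
    by (rule member_le_sum)
       (use excessive green_nonneg in \<open>auto intro!: mult_nonneg_nonneg simp: less_le\<close>)
  finally show ?thesis
    using mult_pos_pos[OF _ green_diag_pos[of i], of "\<rho>$i - (\<Sum>j\<in>UNIV. \<rho>$j * P$j$i)"]
      excessive[of i] by linarith
qed

end

lemma ln_column_sum_lt_Max:
  fixes X :: "'n::finite \<Rightarrow> 'n \<Rightarrow> real" and v :: "real^'n"
  assumes X_nonneg: "\<And>k j. 0 \<le> X k j" and X_diag_pos: "\<And>k. 0 < X k k"
    and column: "\<And>k. k \<noteq> i \<Longrightarrow> X k i = c * X k a" and "0 \<le> c" "c < 1"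
    and v_nonneg: "\<And>k. 0 \<le> v$k" and "v \<noteq> 0" and "v$i = 0"
  shows "(\<Sum>k\<in>UNIV. ln (1 + X k i) * v$k) < (MAX j. \<Sum>k\<in>UNIV. ln (1 + X k j) * v$k)"
proof -
  define f where "f j = (\<Sum>k\<in>UNIV. ln (1 + X k j) * v$k)" for j
  have "\<exists>j. f i < f j"
  proof (cases "\<exists>k. 0 < v$k \<and> 0 < X k i")
    case True
    then obtain k0 where vk0: "0 < v$k0" and Xk0: "0 < X k0 i" by blast
    have "k0 \<noteq> i" using vk0 \<open>v$i = 0\<close> by auto
    have le: "ln (1 + X k i) * v$k \<le> ln (1 + X k a) * v$k" for k
    proof (cases "k = i")
      case False
      then have "X k i \<le> X k a"
        using column[OF False] \<open>0 \<le> c\<close> \<open>c < 1\<close> X_nonneg[of k a] by (simp add: mult_left_le_one_le)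
      then show ?thesis using X_nonneg[of k i] v_nonneg[of k] by (intro mult_right_mono) auto
    qed (use \<open>v$i = 0\<close> in simp)
    have "0 < X k0 a"
      using column[OF \<open>k0 \<noteq> i\<close>] Xk0 X_nonneg[of k0 a] by (auto simp: less_le)
    then have "X k0 i < X k0 a"
      using column[OF \<open>k0 \<noteq> i\<close>] \<open>c < 1\<close> by simp
    then have "ln (1 + X k0 i) * v$k0 < ln (1 + X k0 a) * v$k0"
      using X_nonneg[of k0 i] vk0 by (intro mult_strict_right_mono) auto
    then have "f i < f a"
      unfolding f_def by (intro sum_strict_mono_ex1) (use le in auto)
    then show ?thesis by blast
  next
    case False
    have term_0: "ln (1 + X k i) * v$k = 0" for k
      using False v_nonneg[of k] X_nonneg[of k i] by (cases "v$k = 0") (auto simp: less_le)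
    have "f i = 0"
      unfolding f_def by (rule sum.neutral) (use term_0 in blast)
    obtain k where "v$k \<noteq> 0" using \<open>v \<noteq> 0\<close> by (metis vec_eq_iff zero_index)
    then have "0 < ln (1 + X k k) * v$k"
      using v_nonneg[of k] X_diag_pos[of k] by (intro mult_pos_pos) auto
    also have "\<dots> \<le> f k"
      unfolding f_def using X_nonneg v_nonneg
      by (intro member_le_sum mult_nonneg_nonneg) auto
    finally show ?thesis using \<open>f i = 0\<close> by auto
  qed
  then show ?thesis by (simp add: f_def Max_gr_iff)
qed

lemma (in substochastic) Gamma_setI:
  assumes pos: "\<And>i. 0 < \<gamma>$i"
    and contraction: "\<And>i. \<exists>a c. 0 \<le> c \<and> c < 1 \<and>
      (\<forall>k. k \<noteq> i \<longrightarrow> visit_prob P k i * \<gamma>$i = c * (visit_prob P k a * \<gamma>$a))"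
  shows "\<gamma> \<in> Gamma_set P"
  unfolding Gamma_set_def mem_Collect_eq
proof (intro conjI allI impI)
  show "0 \<le> \<gamma>$i" for i
    using pos[of i] by simp
next
  fix i and v :: "real^'n"
  assume "\<forall>k. 0 \<le> v$k" and "v \<noteq> 0" and "v$i = 0"
  obtain a c where "0 \<le> c" "c < 1"
    and column: "\<And>k. k \<noteq> i \<Longrightarrow> visit_prob P k i * \<gamma>$i = c * (visit_prob P k a * \<gamma>$a)"
    using contraction[of i] by blast
  have arrow: "gamma_arrow P \<gamma> j \<bullet> v = (\<Sum>k\<in>UNIV. ln (1 + visit_prob P k j * \<gamma>$j) * v$k)" for j
    by (simp add: inner_vec_def gamma_arrow_def)
  show "gamma_arrow P \<gamma> i \<bullet> v < (MAX j. gamma_arrow P \<gamma> j \<bullet> v)"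
    unfolding arrow
  proof (rule ln_column_sum_lt_Max[where X = "\<lambda>k j. visit_prob P k j * \<gamma>$j"])
    show "0 \<le> visit_prob P k j * \<gamma>$j" for k j
      using visit_prob_nonneg pos less_imp_le by (blast intro: mult_nonneg_nonneg)
    show "0 < visit_prob P k k * \<gamma>$k" for k
      using pos[of k] by (simp add: visit_prob_def)
  qed (use column \<open>0 \<le> c\<close> \<open>c < 1\<close> \<open>\<forall>k. 0 \<le> v$k\<close> \<open>v \<noteq> 0\<close> \<open>v$i = 0\<close> in auto)
qed

lemma single_predecessor:
  fixes P :: "real^'n::finite^'n"
  assumes "\<And>m. 0 \<le> P$m$i" and "card {j. 0 < P$j$i} \<le> 1"
  obtains a where "\<And>m. m \<noteq> a \<Longrightarrow> P$m$i = 0"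
proof (cases "\<exists>a. 0 < P$a$i")
  case True
  then obtain a where "0 < P$a$i" by blast
  moreover have "x = y" if "0 < P$x$i" "0 < P$y$i" for x y
    using assms(2) that by (auto simp: card_le_Suc0_iff_eq)
  ultimately show ?thesis
    using assms(1) that by (metis less_le)
next
  case False
  then show ?thesis
    using assms(1) that by (metis less_le)
qed

lemma sum_single_predecessor:
  fixes P :: "real^'n::finite^'n"
  assumes "\<And>m. m \<noteq> a \<Longrightarrow> P$m$i = 0"
  shows "(\<Sum>m\<in>UNIV. w m * P$m$i) = w a * P$a$i"
proof -
  have "(\<Sum>m\<in>UNIV. w m * P$m$i) = (\<Sum>m\<in>{a}. w m * P$m$i)"
    by (rule sum.mono_neutral_right) (simp_all add: assms)
  then show ?thesis by simp
qed

lemma (in transient_routing) green_single_predecessor: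
  assumes "\<And>m. m \<noteq> a \<Longrightarrow> P$m$i = 0" and "k \<noteq> i"
  shows "green P $k$i = green P $k$a * P$a$i"
  using green_last_step[of k i] sum_single_predecessor[OF assms(1)] \<open>k \<noteq> i\<close> by simp

theorem proposition3p1:
  fixes lam mu \<nu> \<rho> :: "real^'n::finite" and P :: "real^'n^'n" and \<epsilon> :: real
  assumes lam_nonneg: "\<forall>i. lam$i \<ge> 0"
    and mu_pos: "\<forall>i. mu$i > 0"
    and P_nonneg: "\<forall>i j. P$i$j \<ge> 0"
    and P_diag: "\<forall>i. P$i$i = 0"
    and P_substoch: "\<forall>i. (\<Sum>j\<in>UNIV. P$i$j) \<le> 1"
    and hypA: "kernel_irreducible lam mu P"
    and traffic: "\<forall>j. \<nu>$j = lam$j + (\<Sum>i\<in>UNIV. \<nu>$i * P$i$j)"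
    and hypB: "\<forall>i. \<nu>$i < mu$i"
    and branching: "\<forall>i. card {j. P$j$i > 0} \<le> 1"
    and eps_pos: "\<epsilon> > 0"
    and rho: "\<forall>i. (\<Sum>j\<in>UNIV. \<rho>$j * P$j$i) < \<rho>$i"
  shows "(\<chi> i. \<epsilon> * green P $i$i / \<rho>$i) \<in> Gamma_set P"
proof -
  interpret substochastic P
    using P_nonneg P_substoch by unfold_locales auto
  interpret transient_routing P
    using invertible_I_minus_P[OF hypA] mu_pos by unfold_locales auto
  have \<rho>_pos: "0 < \<rho>$i" for i
    using strictly_excessive_pos rho by blast
  define \<gamma> where "\<gamma> = (\<chi> i. \<epsilon> * green P $i$i / \<rho>$i)"
  have visit_prob_mult_\<gamma>: "visit_prob P k j * \<gamma>$j = \<epsilon> * green P $k$j / \<rho>$j" for k j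
    using visit_prob_mult_green_diag[of k j] by (simp add: \<gamma>_def algebra_simps)
  have "\<gamma> \<in> Gamma_set P"
  proof (rule Gamma_setI)
    show "0 < \<gamma>$i" for i
      using eps_pos green_diag_pos[of i] \<rho>_pos[of i] by (simp add: \<gamma>_def)
    fix i
    obtain a where a: "\<And>m. m \<noteq> a \<Longrightarrow> P$m$i = 0"
      using single_predecessor P_nonneg branching by metis
    define c where "c = P$a$i * \<rho>$a / \<rho>$i"
    have "\<rho>$a * P$a$i < \<rho>$i"
      using rho sum_single_predecessor[OF a, where w = "\<lambda>m. \<rho>$m"] by metis
    then have "0 \<le> c" "c < 1"
      using P_nonneg \<rho>_pos[of a] \<rho>_pos[of i] by (simp_all add: c_def field_simps)
    moreover have "visit_prob P k i * \<gamma>$i = c * (visit_prob P k a * \<gamma>$a)" if "k \<noteq> i" for k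
    proof -
      have "green P $k$i = green P $k$a * P$a$i"
        using a that by (rule green_single_predecessor)
      then have "\<epsilon> * green P $k$i / \<rho>$i = c * (\<epsilon> * green P $k$a / \<rho>$a)"
        using \<rho>_pos[of a] by (simp add: c_def field_simps)
      then show ?thesis by (simp only: visit_prob_mult_\<gamma>)
    qed
    ultimately show "\<exists>a c. 0 \<le> c \<and> c < 1 \<and>
        (\<forall>k. k \<noteq> i \<longrightarrow> visit_prob P k i * \<gamma>$i = c * (visit_prob P k a * \<gamma>$a))"
      by blast
  qed
  then show ?thesis unfolding \<gamma>_def .
qed

end
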